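(* Let $n\in\mathbb{N}$, $1<p<q$, $0<\omega<\omega_{p,q}$, and let $u$ be a positive solution of $$u''(r)+\frac{n-1}{r}u'(r)+f(u(r))=0\ (r>0),\qquad u'(0)=0,\qquad \lim_{r\to\infty}u(r)=0,$$ where $f(u)=-\omega u+u^p-u^q$. Let $B>0$ be the number such that $\Sigma<0$ on $(0,B)$ and $\Sigma>0$ on $(B,C)$ for some $C\in(B,\infty]$, where $\Sigma(u)=2nF(u)-(n-2)uf(u)$ and $F(u)=\int_0^u f(s)\,ds$. Then $$B<\|u\|_\infty=u(0).$$
   Context: $\omega_{p,q}=\frac{2(q-p)}{(p+1)(q-1)}\left[\frac{(p-1)(q+1)}{(p+1)(q-1)}\right]^{\frac{p-1}{q-p}}$; under $0<\omega<\omega_{p,q}$ a positive solution of the boundary value problem exists and is unique. The number $B$ is the smallest positive zero of $\Sigma$; it exists (with the stated sign pattern) under the hypotheses. *)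

theory Defs
  imports "HOL-Analysis.Analysis"
begin

definition fnl :: "real \<Rightarrow> real \<Rightarrow> real \<Rightarrow> real \<Rightarrow> real" where
  "fnl \<omega> p q s = - \<omega> * s + s powr p - s powr q"

definition Fnl :: "real \<Rightarrow> real \<Rightarrow> real \<Rightarrow> real \<Rightarrow> real" where
  "Fnl \<omega> p q s = integral {0..s} (fnl \<omega> p q)"

definition Sigma :: "nat \<Rightarrow> real \<Rightarrow> real \<Rightarrow> real \<Rightarrow> real \<Rightarrow> real" where
  "Sigma n \<omega> p q s = 2 * real n * Fnl \<omega> p q s - (real n - 2) * s * fnl \<omega> p q s"

definition omega_pq :: "real \<Rightarrow> real \<Rightarrow> real" where
  "omega_pq p q = 2 * (q - p) / ((p + 1) * (q - 1)) *
     (((p - 1) * (q + 1)) / ((p + 1) * (q - 1))) powr ((p - 1) / (q - p))"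

end

theory Submission
  imports Defs
begin

(* Two monotone quantities drive the proof:
   - the energy E = u'^2/2 + F(u), with E' = -(n-1)/r u'^2 <= 0;
   - the Pohozaev function P = r^n (u'^2 + 2 F(u)) + (n-2) r^(n-1) u u', with
     P' = r^(n-1) Sigma(u), where Sigma(s) = 2n F(s) - (n-2) s f(s).
   Since f(s) <= -c s near 0, u is eventually decreasing and u, u' decay exponentially, so E
   and P tend to 0 at infinity; along a sequence r_k -> 0 with u'(r_k) -> 0 they tend to F(u(0))
   and to 0.  Hence 0 <= E <= F(u(0)).  (1) An interior maximum point r0 with u(r0) > u(0) has
   u'(r0) = 0 and f(u(r0)) >= 0, so 0 <= F(u(r0)) <= F(u(0)); this contradicts the shape of F
   (f(s)/s is strictly quasi-concave), so sup u = u(0).  (2) If u(0) <= B, then Sigma(u) <= 0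
   everywhere, so P decreases from 0 to 0, yet decreases strictly where u < B. *)

text \<open>Mean value theorem with differentiability required only in the open interval; used
  at the endpoint $0$, where $F$ and $u$ are merely continuous.\<close>
lemma mvt_open_interval:
  fixes f f' :: "real \<Rightarrow> real"
  assumes "a < b" "continuous_on {a..b} f" "\<And>x. a < x \<Longrightarrow> x < b \<Longrightarrow> (f has_real_derivative f' x) (at x)"
  shows "\<exists>z. a < z \<and> z < b \<and> f b - f a = (b - a) * f' z"
proof -
  obtain l z where "a < z" "z < b" "(f has_real_derivative l) (at z)" "f b - f a = (b - a) * l"
    using MVT[OF assms(1,2)] assms(3) real_differentiable_def by blast
  then show ?thesis using assms(3) DERIV_unique by metis
qed

lemma poly_exp_tendsto_zero:
  assumes "(k::real) > 0"
  shows "((\<lambda>x. x ^ j * exp (- k * x)) \<longlongrightarrow> 0) at_top"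
proof -
  have k_lin: "filterlim (\<lambda>x. k * x) at_top at_top"
    by (rule filterlim_tendsto_pos_mult_at_top[OF tendsto_const assms filterlim_ident])
  have "((\<lambda>x. (k * x) ^ j / exp (k * x)) \<longlongrightarrow> 0) at_top"
    using filterlim_compose[OF tendsto_power_div_exp_0[of j] k_lin] by simp
  then have "((\<lambda>x. (k * x) ^ j / exp (k * x) / k ^ j) \<longlongrightarrow> 0) at_top"
    by (rule tendsto_divide_zero)
  moreover have "(k * x) ^ j / exp (k * x) / k ^ j = x ^ j * exp (- k * x)" for x
    using assms by (simp add: power_mult_distrib exp_minus field_simps)
  ultimately show ?thesis by simp
qed

lemma fnl_continuous_on: "0 < p \<Longrightarrow> 0 < q \<Longrightarrow> continuous_on {0..} (fnl \<omega> p q)"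
  unfolding fnl_def by (intro continuous_intros continuous_on_powr') auto

lemma Fnl_has_derivative_within:
  assumes "0 < p" "0 < q" "0 \<le> s" "s \<le> b"
  shows "(Fnl \<omega> p q has_real_derivative fnl \<omega> p q s) (at s within {0..b})"
proof -
  have "continuous_on {0..b} (fnl \<omega> p q)"
    using fnl_continuous_on[OF assms(1,2)] by (rule continuous_on_subset) auto
  then show ?thesis
    unfolding Fnl_def[abs_def] using integral_has_real_derivative assms by auto
qed

lemma Fnl_has_derivative:
  assumes "0 < p" "0 < q" "0 < s"
  shows "(Fnl \<omega> p q has_real_derivative fnl \<omega> p q s) (at s)"
proof -
  have "(Fnl \<omega> p q has_real_derivative fnl \<omega> p q s) (at s within {0..s+1})"
    by (rule Fnl_has_derivative_within) (use assms in auto)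
  moreover have "at s within {0..s+1} = at s"
    by (rule at_within_Icc_at) (use assms in auto)
  ultimately show ?thesis by simp
qed

lemma Fnl_continuous_on:
  assumes "0 < p" "0 < q"
  shows "continuous_on {0..b} (Fnl \<omega> p q)"
proof (rule continuous_on_subset[of "{0..max b 0}"])
  show "continuous_on {0..max b 0} (Fnl \<omega> p q)"
    unfolding continuous_on_eq_continuous_within
    using Fnl_has_derivative_within[OF assms] DERIV_continuous by fastforce
qed auto

lemma Fnl_zero [simp]: "Fnl \<omega> p q 0 = 0"
  unfolding Fnl_def by simp

text \<open>The quotient $f(s)/s = -\omega + s^{p-1} - s^{q-1}$, whose shape governs that of $F$.\<close>
definition fnl_quotient :: "real \<Rightarrow> real \<Rightarrow> real \<Rightarrow> real \<Rightarrow> real" where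
  "fnl_quotient \<omega> p q s = - \<omega> + s powr (p - 1) - s powr (q - 1)"

lemma fnl_eq_quotient: "0 < s \<Longrightarrow> fnl \<omega> p q s = s * fnl_quotient \<omega> p q s"
  unfolding fnl_def fnl_quotient_def by (simp add: algebra_simps powr_mult_base)

lemma fnl_quotient_has_derivative:
  assumes "0 < z"
  shows "(fnl_quotient \<omega> p q has_real_derivative
           z powr (p - 2) * ((p - 1) - (q - 1) * z powr (q - p))) (at z)"
proof -
  have "z powr (q - 2) = z powr (p - 2) * z powr (q - p)"
    using assms by (simp add: powr_add[symmetric])
  then have "(p - 1) * z powr (p - 1 - 1) - (q - 1) * z powr (q - 1 - 1)
             = z powr (p - 2) * ((p - 1) - (q - 1) * z powr (q - p))"
    by (simp add: algebra_simps)
  moreover have "(fnl_quotient \<omega> p q has_real_derivative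
      (p - 1) * z powr (p - 1 - 1) - (q - 1) * z powr (q - 1 - 1)) (at z)"
    unfolding fnl_quotient_def[abs_def] using assms
    by (auto intro!: derivative_eq_intros)
  ultimately show ?thesis by simp
qed

text \<open>The quotient $f(s)/s$ increases while $(q-1) s^{q-p} < p-1$ and decreases afterwards;
  hence it is strictly quasi-concave: it exceeds the smaller of its two endpoint values.\<close>
lemma fnl_quotient_quasiconcave:
  assumes pq: "1 < p" "p < q" and yxs: "0 < y" "y < x" "x < s"
  shows "fnl_quotient \<omega> p q x > min (fnl_quotient \<omega> p q y) (fnl_quotient \<omega> p q s)"
proof -
  let ?g = "fnl_quotient \<omega> p q" and ?g' = "\<lambda>z. z powr (p - 2) * ((p - 1) - (q - 1) * z powr (q - p))"
  have slope_mono: "(q - 1) * a powr (q - p) < (q - 1) * b powr (q - p)" if "0 < a" "a < b" for a b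
    using that pq by (simp add: powr_less_mono2)
  show ?thesis
  proof (cases "(q - 1) * x powr (q - p) \<le> p - 1")
    case True
    obtain z where z: "y < z" "z < x" "?g x - ?g y = (x - y) * ?g' z"
      using MVT2[of y x ?g ?g'] yxs fnl_quotient_has_derivative by force
    have "(q - 1) * z powr (q - p) < p - 1" using slope_mono[of z x] z yxs True by auto
    then have "?g' z > 0" using z yxs by simp
    then have "(x - y) * ?g' z > 0" using z by simp
    then show ?thesis using z by simp
  next
    case False
    obtain z where z: "x < z" "z < s" "?g s - ?g x = (s - x) * ?g' z"
      using MVT2[of x s ?g ?g'] yxs fnl_quotient_has_derivative by force
    have "(q - 1) * z powr (q - p) > p - 1" using slope_mono[of x z] z yxs False by auto
    then have "?g' z < 0" using z yxs by (simp add: mult_pos_neg)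
    then have "?g s - ?g x < 0" using z by (simp add: mult_pos_neg)
    then show ?thesis by simp
  qed
qed

text \<open>Write $F(s) - F(t) = (s-t) f(\xi)$ and $F(t) = t f(\eta)$; if $f(\xi) \le 0 \le f(s)$,
  quasi-concavity of $f(s)/s$ forces $f(\eta) < 0$.\<close>
lemma Fnl_shape:
  assumes pq: "1 < p" "p < q" and ts: "0 < t" "t < s" and fs: "fnl \<omega> p q s \<ge> 0"
  shows "Fnl \<omega> p q t < Fnl \<omega> p q s \<or> Fnl \<omega> p q t < 0"
proof -
  have pq0: "0 < p" "0 < q" using pq by auto
  have cont: "continuous_on {a..b} (Fnl \<omega> p q)" if "0 \<le> a" for a b
    by (rule continuous_on_subset[OF Fnl_continuous_on[OF pq0, of b]]) (use that in auto)
  obtain \<xi> where xi: "t < \<xi>" "\<xi> < s" "Fnl \<omega> p q s - Fnl \<omega> p q t = (s - t) * fnl \<omega> p q \<xi>"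
    using mvt_open_interval[of t s "Fnl \<omega> p q" "fnl \<omega> p q"] ts cont Fnl_has_derivative[OF pq0]
    by force
  obtain \<eta> where eta: "0 < \<eta>" "\<eta> < t" "Fnl \<omega> p q t - Fnl \<omega> p q 0 = (t - 0) * fnl \<omega> p q \<eta>"
    using mvt_open_interval[of 0 t "Fnl \<omega> p q" "fnl \<omega> p q"] ts cont Fnl_has_derivative[OF pq0]
    by force
  show ?thesis
  proof (cases "fnl \<omega> p q \<xi> > 0")
    case True
    then have "(s - t) * fnl \<omega> p q \<xi> > 0" using xi by simp
    then show ?thesis using xi by linarith
  next
    case False
    then have "fnl_quotient \<omega> p q \<xi> \<le> 0"
      using fnl_eq_quotient[of \<xi>] xi ts by (simp add: zero_less_mult_iff)
    moreover have "fnl_quotient \<omega> p q s \<ge> 0"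
      using fs fnl_eq_quotient[of s] ts by (simp add: zero_le_mult_iff)
    moreover have "fnl_quotient \<omega> p q \<xi> > min (fnl_quotient \<omega> p q \<eta>) (fnl_quotient \<omega> p q s)"
      by (rule fnl_quotient_quasiconcave) (use pq eta xi in auto)
    ultimately have "fnl_quotient \<omega> p q \<eta> < 0" by auto
    then have "fnl \<omega> p q \<eta> < 0" using fnl_eq_quotient[of \<eta>] eta by (simp add: mult_pos_neg)
    then show ?thesis using eta by (simp add: mult_pos_neg)
  qed
qed

text \<open>Near zero the linear term dominates: $f(s) \le -\frac{\omega}{2} s$ and $|F(s)| \le (\omega+1) s$.
  This is what makes decaying solutions decay exponentially.\<close>
lemma fnl_small_amplitude:
  assumes pq: "1 < p" "p < q" and om: "0 < \<omega>"
  shows "\<exists>c>0. \<exists>\<delta>>0. \<exists>M. \<forall>s. 0 < s \<and> s < \<delta> \<longrightarrow>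
           fnl \<omega> p q s \<le> - c * s \<and> \<bar>Fnl \<omega> p q s\<bar> \<le> M * s"
proof (intro exI conjI allI impI)
  define \<delta> where "\<delta> = min 1 ((\<omega> / 2) powr (1 / (p - 1)))"
  show "\<omega> / 2 > 0" "\<delta> > 0" using om by (auto simp: \<delta>_def)
  have f_upper: "fnl \<omega> p q s \<le> - (\<omega> / 2) * s" if s: "0 < s" "s < \<delta>" for s
  proof -
    have "s powr (p - 1) < ((\<omega> / 2) powr (1 / (p - 1))) powr (p - 1)"
      by (rule powr_less_mono2) (use s pq in \<open>auto simp: \<delta>_def\<close>)
    also have "\<dots> = \<omega> / 2" using pq om by (simp add: powr_powr)
    finally have "fnl_quotient \<omega> p q s \<le> - (\<omega> / 2)"
      unfolding fnl_quotient_def using powr_ge_zero[of s "q - 1"] by linarith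
    then have "s * fnl_quotient \<omega> p q s \<le> s * - (\<omega> / 2)" using s by (intro mult_left_mono) auto
    then show ?thesis using fnl_eq_quotient[of s] s by (simp add: algebra_simps)
  qed
  have f_lower: "fnl \<omega> p q s \<ge> - (\<omega> + 1)" if s: "0 < s" "s < \<delta>" for s
  proof -
    have "s powr q \<le> 1" by (rule powr_le1) (use s pq in \<open>auto simp: \<delta>_def\<close>)
    moreover have "\<omega> * s \<le> \<omega>" using s om by (simp add: \<delta>_def)
    ultimately show ?thesis unfolding fnl_def using powr_ge_zero[of s p] by linarith
  qed
  fix s assume s: "0 < s \<and> s < \<delta>"
  then show "fnl \<omega> p q s \<le> - (\<omega> / 2) * s" using f_upper by blast
  have pq0: "0 < p" "0 < q" using pq by auto
  obtain \<eta> where eta: "0 < \<eta>" "\<eta> < s" "Fnl \<omega> p q s - Fnl \<omega> p q 0 = (s - 0) * fnl \<omega> p q \<eta>"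
    using mvt_open_interval[of 0 s "Fnl \<omega> p q" "fnl \<omega> p q"] s Fnl_continuous_on[OF pq0]
      Fnl_has_derivative[OF pq0] by force
  have "(\<omega> / 2) * \<eta> > 0" using om eta by simp
  then have "fnl \<omega> p q \<eta> \<le> 0" using f_upper[of \<eta>] eta s by fastforce
  then have "\<bar>fnl \<omega> p q \<eta>\<bar> \<le> \<omega> + 1"
    using f_lower[of \<eta>] eta s om unfolding abs_le_iff by auto
  then show "\<bar>Fnl \<omega> p q s\<bar> \<le> (\<omega> + 1) * s"
    using eta s by (simp add: abs_mult mult.commute mult_left_mono)
qed

locale radial_profile =
  fixes n :: nat and f F u u' u'' :: "real \<Rightarrow> real"
  assumes dim: "1 \<le> n"
    and F_deriv: "\<And>s. 0 < s \<Longrightarrow> (F has_real_derivative f s) (at s)"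
    and f_cont: "\<And>s. 0 < s \<Longrightarrow> isCont f s"
    and small_amplitude:
      "\<exists>c>0. \<exists>\<delta>>0. \<exists>M. \<forall>s. 0 < s \<and> s < \<delta> \<longrightarrow> f s \<le> - c * s \<and> \<bar>F s\<bar> \<le> M * s"
    and u_pos: "\<And>r. 0 \<le> r \<Longrightarrow> 0 < u r"
    and u_deriv: "\<And>r. 0 < r \<Longrightarrow> (u has_real_derivative u' r) (at r)"
    and u'_deriv: "\<And>r. 0 < r \<Longrightarrow> (u' has_real_derivative u'' r) (at r)"
    and ode: "\<And>r. 0 < r \<Longrightarrow> u'' r + (real n - 1) / r * u' r + f (u r) = 0"
    and u_deriv_origin: "(u has_real_derivative 0) (at 0 within {0..})"
    and u_decays: "(u \<longlongrightarrow> 0) at_top"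
begin

lemma u''_eq: "0 < r \<Longrightarrow> u'' r = - ((real n - 1) / r * u' r) - f (u r)"
  using ode[of r] by linarith

lemma u_continuous_on:
  assumes "0 \<le> a"
  shows "continuous_on {a..b} u"
  unfolding continuous_on_eq_continuous_within
proof
  fix x assume x: "x \<in> {a..b}"
  show "continuous (at x within {a..b}) u"
  proof (cases "x = 0")
    case True
    have "continuous (at 0 within {0..}) u" using u_deriv_origin by (rule DERIV_continuous)
    then show ?thesis using True assms continuous_within_subset[of 0 "{0..}" u "{a..b}"] by auto
  next
    case False
    then have "0 < x" using x assms by auto
    then show ?thesis
      using u_deriv DERIV_continuous continuous_at_imp_continuous_within by blast
  qed
qed

text \<open>A sequence $\xi_k \to 0^+$ along which $u' \to 0$: by the mean value theorem applied on
  $[0, 1/(k+1)]$, $u'(\xi_k)$ is a difference quotient of $u$ at the origin.\<close>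
lemma approach_origin:
  obtains \<xi> :: "nat \<Rightarrow> real" where "\<And>k. 0 < \<xi> k" "\<xi> \<longlonglongrightarrow> 0"
    "(\<lambda>k. u' (\<xi> k)) \<longlonglongrightarrow> 0" "(\<lambda>k. u (\<xi> k)) \<longlonglongrightarrow> u 0"
proof -
  define h :: "nat \<Rightarrow> real" where "h k = inverse (real (Suc k))" for k
  have h_pos: "0 < h k" for k unfolding h_def by simp
  have h_lim: "h \<longlonglongrightarrow> 0" unfolding h_def by (rule LIMSEQ_inverse_real_of_nat)
  have "\<exists>z. 0 < z \<and> z < h k \<and> u (h k) - u 0 = (h k - 0) * u' z" for k
    by (rule mvt_open_interval) (use h_pos u_continuous_on u_deriv in auto)
  then obtain \<xi> where \<xi>: "\<And>k. 0 < \<xi> k" "\<And>k. \<xi> k < h k" "\<And>k. u (h k) - u 0 = h k * u' (\<xi> k)"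
    by (metis diff_zero)
  have \<xi>_lim: "\<xi> \<longlonglongrightarrow> 0"
    by (rule tendsto_sandwich[OF _ _ tendsto_const h_lim])
      (use \<xi> in \<open>auto intro!: always_eventually less_imp_le\<close>)
  have within_origin: "filterlim g (at 0 within {0..}) sequentially"
    if "\<And>k. 0 < g k" "g \<longlonglongrightarrow> 0" for g :: "nat \<Rightarrow> real"
  proof -
    have "\<forall>k. g k \<in> {0..} \<and> g k \<noteq> 0" using that(1) by (metis atLeast_iff less_imp_le less_irrefl)
    then show ?thesis unfolding filterlim_at using that(2) by (simp add: always_eventually)
  qed
  have "((\<lambda>y. (u y - u 0) / (y - 0)) \<longlongrightarrow> 0) (at 0 within {0..})"
    using u_deriv_origin by (simp add: has_field_derivative_iff)
  then have "(\<lambda>k. (u (h k) - u 0) / (h k - 0)) \<longlonglongrightarrow> 0"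
    using within_origin[OF h_pos h_lim] by (rule filterlim_compose)
  moreover have "(u (h k) - u 0) / (h k - 0) = u' (\<xi> k)" for k
    using \<xi>(3)[of k] h_pos[of k] by simp
  ultimately have "(\<lambda>k. u' (\<xi> k)) \<longlonglongrightarrow> 0" by simp
  moreover have "(\<lambda>k. u (\<xi> k)) \<longlonglongrightarrow> u 0"
  proof -
    have "(u \<longlongrightarrow> u 0) (at 0 within {0..})"
      using DERIV_continuous[OF u_deriv_origin] by (simp add: continuous_within)
    then show ?thesis using within_origin[OF \<xi>(1) \<xi>_lim] by (rule filterlim_compose)
  qed
  ultimately show thesis using that \<xi>(1) \<xi>_lim by blast
qed

definition energy :: "real \<Rightarrow> real" where
  "energy r = u' r * u' r / 2 + F (u r)"

lemma energy_deriv: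
  assumes r: "0 < r"
  shows "(energy has_real_derivative - ((real n - 1) / r) * (u' r * u' r)) (at r)"
proof -
  have kinetic: "((\<lambda>r. u' r * u' r / 2) has_real_derivative (u'' r * u' r + u' r * u'' r) / 2) (at r)"
    by (rule DERIV_cong[OF DERIV_cdivide[OF DERIV_mult[OF u'_deriv u'_deriv]]])
      (use r in \<open>simp_all add: algebra_simps\<close>)
  have potential: "((\<lambda>r. F (u r)) has_real_derivative f (u r) * u' r) (at r)"
    by (rule DERIV_chain2[OF F_deriv u_deriv]) (use r u_pos in auto)
  have "(energy has_real_derivative (u'' r * u' r + u' r * u'' r) / 2 + f (u r) * u' r) (at r)"
    unfolding energy_def[abs_def] using kinetic potential by (rule DERIV_add)
  moreover have "(u'' r * u' r + u' r * u'' r) / 2 + f (u r) * u' r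
                 = - ((real n - 1) / r) * (u' r * u' r)"
    using r by (simp add: u''_eq field_simps)
  ultimately show ?thesis by simp
qed

lemma energy_antimono:
  assumes "0 < a" "a \<le> b"
  shows "energy b \<le> energy a"
proof (rule DERIV_nonpos_imp_nonincreasing[OF assms(2)])
  fix x assume "a \<le> x" "x \<le> b"
  then have x: "0 < x" using assms by auto
  have "0 \<le> (real n - 1) / x * (u' x * u' x)" using x dim by simp
  then show "\<exists>y. (energy has_real_derivative y) (at x) \<and> y \<le> 0"
    using energy_deriv[OF x] by fastforce
qed

lemma tail_small_amplitude:
  obtains c R M where "0 < c" "1 \<le> R"
    "\<And>r. R \<le> r \<Longrightarrow> f (u r) \<le> - c * u r" "\<And>r. R \<le> r \<Longrightarrow> \<bar>F (u r)\<bar> \<le> M * u r"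
proof -
  obtain c \<delta> M where c: "0 < c" "0 < \<delta>"
    and bound: "\<And>s. 0 < s \<Longrightarrow> s < \<delta> \<Longrightarrow> f s \<le> - c * s \<and> \<bar>F s\<bar> \<le> M * s"
    using small_amplitude by blast
  obtain N where N: "\<And>r. N \<le> r \<Longrightarrow> u r < \<delta>"
    using order_tendstoD(2)[OF u_decays c(2)] by (auto simp: eventually_at_top_linorder)
  show thesis
    by (rule that[of c "max N 1" M]) (use c bound N u_pos in auto)
qed

lemma weighted_slope_deriv:
  assumes r: "0 < r"
  shows "((\<lambda>r. r ^ (n - 1) * u' r) has_real_derivative - (r ^ (n - 1) * f (u r))) (at r)"
proof -
  obtain m where nm: "n = Suc m" using dim by (cases n) auto
  have "((\<lambda>r. r ^ m * u' r) has_real_derivative real m * r ^ (m - 1) * u' r + r ^ m * u'' r) (at r)"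
    by (rule DERIV_cong[OF DERIV_mult[OF DERIV_pow u'_deriv[OF r]]]) (simp add: algebra_simps)
  moreover have "real m * r ^ (m - 1) * u' r + r ^ m * u'' r = - (r ^ m * f (u r))"
  proof -
    have "real m * r ^ (m - 1) = real m * r ^ m / r" using r by (cases m) auto
    then have "real m * r ^ (m - 1) * u' r + r ^ m * u'' r = real m * r ^ m / r * u' r + r ^ m * u'' r"
      by simp
    also have "\<dots> = - (r ^ m * f (u r))" using r by (simp add: u''_eq nm field_simps)
    finally show ?thesis .
  qed
  ultimately show ?thesis using nm by simp
qed

text \<open>Where $f(u) < 0$ on a tail, $r^{n-1} u'$ increases there; since $u \to 0$, this forces
  $u' < 0$ on the whole tail.\<close>
lemma tail_decreasing:
  assumes c: "0 < c" and R: "0 < R" and f_neg: "\<And>r. R \<le> r \<Longrightarrow> f (u r) \<le> - c * u r"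
    and r: "R \<le> r"
  shows "u' r < 0"
proof (rule ccontr)
  define w where "w r = r ^ (n - 1) * u' r" for r
  assume "\<not> u' r < 0"
  then have w_r: "0 \<le> w r" unfolding w_def using r R by simp
  have u'_pos: "0 < u' x" if x: "r < x" for x
  proof -
    obtain z where z: "r < z" "z < x" "w x - w r = (x - r) * - (z ^ (n - 1) * f (u z))"
      using MVT2[OF x, of w "\<lambda>z. - (z ^ (n - 1) * f (u z))"] weighted_slope_deriv r R
      unfolding w_def by force
    have "0 < c * u z" using c u_pos[of z] z r R by simp
    then have "f (u z) < 0" using f_neg[of z] z r by linarith
    then have "0 < (x - r) * - (z ^ (n - 1) * f (u z))"
      using z r R by (simp add: mult_pos_neg)
    then have "0 < x ^ (n - 1) * u' x" using z(3) w_r unfolding w_def by linarith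
    then show ?thesis using x r R by (simp add: zero_less_mult_iff)
  qed
  have u_grows: "u (r + 1) \<le> u x" if "r + 1 \<le> x" for x
  proof (rule DERIV_nonneg_imp_nondecreasing[OF that])
    fix y assume "r + 1 \<le> y" "y \<le> x"
    then show "\<exists>d. (u has_real_derivative d) (at y) \<and> 0 \<le> d"
      using u_deriv u'_pos[of y] r R by (intro exI[of _ "u' y"]) auto
  qed
  obtain N where "\<And>x. N \<le> x \<Longrightarrow> u x < u (r + 1)"
    using order_tendstoD(2)[OF u_decays u_pos[of "r + 1"]] r R
    by (auto simp: eventually_at_top_linorder)
  then have "u (max N (r + 1)) < u (r + 1)" by simp
  moreover have "u (r + 1) \<le> u (max N (r + 1))" by (rule u_grows) simp
  ultimately show False by linarith
qed

text \<open>On such a tail $u'' \ge c\,u$ (convexity), because the friction term $-\frac{n-1}{r}u'$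
  is then nonnegative.\<close>
lemma tail_convex:
  assumes c: "0 < c" and R: "0 < R" and f_neg: "\<And>r. R \<le> r \<Longrightarrow> f (u r) \<le> - c * u r"
    and r: "R \<le> r"
  shows "c * u r \<le> u'' r"
proof -
  have "0 \<le> (real n - 1) / r" using dim r R by simp
  then have "(real n - 1) / r * u' r \<le> 0"
    using mult_nonneg_nonpos less_imp_le[OF tail_decreasing[OF c R f_neg r]] by blast
  then show ?thesis using u''_eq[of r] f_neg[OF r] r R by simp
qed

text \<open>Otherwise
  $e^{-kr}(u' + k u)$, whose derivative $e^{-kr}(u'' - k^2 u)$ is nonnegative, keeps
  $u' + k u$ above a positive constant; as $u' < 0$, this bounds $u$ away from zero.\<close>
lemma tail_slope_bound:
  assumes k: "0 < k" and R: "0 < R"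
    and conv: "\<And>r. R \<le> r \<Longrightarrow> k * k * u r \<le> u'' r" and dec: "\<And>r. R \<le> r \<Longrightarrow> u' r < 0"
    and r: "R \<le> r"
  shows "u' r + k * u r \<le> 0"
proof (rule ccontr)
  define a where "a = u' r + k * u r"
  assume "\<not> u' r + k * u r \<le> 0"
  then have a: "0 < a" unfolding a_def by simp
  define h where "h x = exp (- k * x) * (u' x + k * u x)" for x
  have h_deriv: "(h has_real_derivative exp (- k * x) * (u'' x - k * k * u x)) (at x)"
    if x: "0 < x" for x
    unfolding h_def[abs_def]
    by (rule DERIV_cong[OF DERIV_mult[OF _ DERIV_add[OF u'_deriv[OF x] DERIV_cmult[OF u_deriv[OF x]]]]])
      (auto intro!: derivative_eq_intros simp: algebra_simps)
  have u_large: "a / k < u x" if x: "r \<le> x" for x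
  proof -
    have "h r \<le> h x"
    proof (rule DERIV_nonneg_imp_nondecreasing[OF x])
      fix y assume "r \<le> y" "y \<le> x"
      then have y: "R \<le> y" "0 < y" using r R by auto
      then show "\<exists>d. (h has_real_derivative d) (at y) \<and> 0 \<le> d"
        using h_deriv[OF y(2)] conv[OF y(1)] by (intro exI[of _ "exp (- k * y) * (u'' y - k * k * u y)"]) simp
    qed
    then have "exp (k * x) * (exp (- k * r) * a) \<le> exp (k * x) * h x"
      unfolding h_def a_def by (rule mult_left_mono) simp
    also have "\<dots> = u' x + k * u x" unfolding h_def by (simp add: exp_minus field_simps)
    finally have "exp (k * x - k * r) * a \<le> u' x + k * u x"
      by (simp add: exp_diff exp_minus field_simps)
    moreover have "a \<le> exp (k * x - k * r) * a"
      using a k x by (simp add: mult_le_cancel_right1 algebra_simps)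
    moreover have "u' x < 0" using dec x r by simp
    ultimately have "a < k * u x" by linarith
    then show ?thesis using k by (simp add: field_simps)
  qed
  obtain N where "\<And>x. N \<le> x \<Longrightarrow> u x < a / k"
    using order_tendstoD(2)[OF u_decays, of "a / k"] a k by (auto simp: eventually_at_top_linorder)
  then have "u (max N r) < a / k" by simp
  then show False using u_large[of "max N r"] by simp
qed

lemma u_exp_decay:
  assumes k: "0 < k" and R: "0 < R" and slope: "\<And>r. R \<le> r \<Longrightarrow> u' r + k * u r \<le> 0"
    and x: "R \<le> x"
  shows "u x \<le> exp (k * R) * u R * exp (- k * x)"
proof -
  define e where "e y = exp (k * y) * u y" for y
  have "e x \<le> e R"
  proof (rule DERIV_nonpos_imp_nonincreasing[OF x])
    fix y assume "R \<le> y" "y \<le> x"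
    then have y: "R \<le> y" "0 < y" using R by auto
    have "(e has_real_derivative exp (k * y) * (u' y + k * u y)) (at y)"
      unfolding e_def[abs_def]
      by (rule DERIV_cong[OF DERIV_mult[OF _ u_deriv[OF y(2)]]])
        (auto intro!: derivative_eq_intros simp: algebra_simps)
    moreover have "exp (k * y) * (u' y + k * u y) \<le> 0"
      using slope[OF y(1)] by (simp add: mult_nonneg_nonpos)
    ultimately show "\<exists>d. (e has_real_derivative d) (at y) \<and> d \<le> 0" by blast
  qed
  then have "exp (- k * x) * (exp (k * x) * u x) \<le> exp (- k * x) * (exp (k * R) * u R)"
    unfolding e_def by (rule mult_left_mono) simp
  then show ?thesis by (simp add: exp_minus field_simps)
qed

text \<open>For a decreasing convex tail, $|u'(x)| \le u(x-1) - u(x)$, so $u'$ inherits the decay of $u$.\<close>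
lemma u'_exp_decay:
  assumes R: "0 < R" and conv: "\<And>r. R \<le> r \<Longrightarrow> 0 \<le> u'' r" and dec: "\<And>r. R \<le> r \<Longrightarrow> u' r < 0"
    and u_bound: "\<And>x. R \<le> x \<Longrightarrow> u x \<le> C * exp (- k * x)"
    and x: "R + 1 \<le> x"
  shows "\<bar>u' x\<bar> \<le> C * exp k * exp (- k * x)"
proof -
  obtain z where z: "x - 1 < z" "z < x" "u x - u (x - 1) = (x - (x - 1)) * u' z"
    using MVT2[of "x - 1" x u u'] u_deriv x R by force
  have "u' z \<le> u' x"
  proof (rule DERIV_nonneg_imp_nondecreasing[of z x])
    show "z \<le> x" using z by simp
    fix y assume "z \<le> y" "y \<le> x"
    then have y: "R \<le> y" "0 < y" using z x R by auto
    then show "\<exists>d. (u' has_real_derivative d) (at y) \<and> 0 \<le> d"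
      using u'_deriv conv by blast
  qed
  then have "- u' x \<le> u (x - 1) - u x" using z by simp
  also have "\<dots> \<le> u (x - 1)" using u_pos[of x] x R by simp
  also have "\<dots> \<le> C * exp (- k * (x - 1))" using u_bound x by simp
  also have "\<dots> = C * exp k * exp (- k * x)" by (simp add: algebra_simps exp_add[symmetric])
  finally show ?thesis using dec[of x] x by simp
qed

text \<open>Exponential decay of all the quadratic quantities entering the energy and the Pohozaev
  function, obtained by chaining the tail lemmas with $k = \sqrt c$.\<close>
lemma tail_quantities_decay:
  obtains k R C where "0 < k" "1 \<le> R"
    "\<And>x. R \<le> x \<Longrightarrow> \<bar>u' x * u' x\<bar> \<le> C * exp (- k * x)"
    "\<And>x. R \<le> x \<Longrightarrow> \<bar>u x * u' x\<bar> \<le> C * exp (- k * x)"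
    "\<And>x. R \<le> x \<Longrightarrow> \<bar>F (u x)\<bar> \<le> C * exp (- k * x)"
proof -
  obtain c R M where c: "0 < c" and R: "1 \<le> R" and f_neg: "\<And>r. R \<le> r \<Longrightarrow> f (u r) \<le> - c * u r"
    and F_bound: "\<And>r. R \<le> r \<Longrightarrow> \<bar>F (u r)\<bar> \<le> M * u r"
    by (fact tail_small_amplitude)
  define k where "k = sqrt c"
  have k: "0 < k" "k * k = c" using c by (auto simp: k_def)
  have R0: "0 < R" using R by simp
  have dec: "\<And>r. R \<le> r \<Longrightarrow> u' r < 0" using tail_decreasing[OF c R0 f_neg] .
  have conv: "\<And>r. R \<le> r \<Longrightarrow> k * k * u r \<le> u'' r" using tail_convex[OF c R0 f_neg] k by simp
  define Cu where "Cu = exp (k * R) * u R"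
  define C2 where "C2 = Cu * exp k"
  have Cu: "0 < Cu" and C2: "0 < C2" using u_pos[of R] R by (auto simp: Cu_def C2_def)
  have u_bound: "\<And>x. R \<le> x \<Longrightarrow> u x \<le> Cu * exp (- k * x)"
    unfolding Cu_def using u_exp_decay[OF k(1) R0 tail_slope_bound[OF k(1) R0 conv dec]] .
  have convex: "0 \<le> u'' r" if "R \<le> r" for r
  proof -
    have "0 \<le> k * k * u r" using u_pos[of r] c k that R0 by simp
    then show ?thesis using conv[OF that] by linarith
  qed
  have u'_bound: "\<bar>u' x\<bar> \<le> C2 * exp (- k * x)" if "R + 1 \<le> x" for x
    using u'_exp_decay[OF R0 convex dec u_bound that] unfolding C2_def .
  have bounds: "\<bar>u' x * u' x\<bar> \<le> C2 * C2 * exp (- k * x) \<and> \<bar>u x * u' x\<bar> \<le> Cu * C2 * exp (- k * x)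
      \<and> \<bar>F (u x)\<bar> \<le> \<bar>M\<bar> * Cu * exp (- k * x)" if x: "R + 1 \<le> x" for x
  proof -
    define e where "e = exp (- k * x)"
    have e: "0 < e" "e \<le> 1" using k x R by (auto simp: e_def)
    have ux: "0 < u x" "u x \<le> Cu * e" using u_pos u_bound x R by (auto simp: e_def)
    have u'x: "\<bar>u' x\<bar> \<le> C2 * e" using u'_bound[OF x] by (simp add: e_def)
    have "\<bar>u' x * u' x\<bar> \<le> (C2 * e) * (C2 * e)"
      unfolding abs_mult by (intro mult_mono) (use u'x e C2 in auto)
    also have "\<dots> = (C2 * C2 * e) * e" by (simp add: algebra_simps)
    also have "\<dots> \<le> C2 * C2 * e" by (rule mult_left_le) (use e C2 in auto)
    finally have kinetic: "\<bar>u' x * u' x\<bar> \<le> C2 * C2 * e" .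
    have "\<bar>u x * u' x\<bar> \<le> (Cu * e) * (C2 * e)"
      unfolding abs_mult using ux u'x by (intro mult_mono) auto
    also have "\<dots> = (Cu * C2 * e) * e" by (simp add: algebra_simps)
    also have "\<dots> \<le> Cu * C2 * e" by (rule mult_left_le) (use e Cu C2 in auto)
    finally have mixed: "\<bar>u x * u' x\<bar> \<le> Cu * C2 * e" .
    have "M * u x \<le> \<bar>M\<bar> * u x" using ux by (intro mult_right_mono) auto
    then have "\<bar>F (u x)\<bar> \<le> \<bar>M\<bar> * u x" using F_bound[of x] x by linarith
    also have "\<dots> \<le> \<bar>M\<bar> * (Cu * e)" using ux by (intro mult_left_mono) auto
    finally have "\<bar>F (u x)\<bar> \<le> \<bar>M\<bar> * Cu * e" by (simp add: mult.assoc)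
    then show ?thesis using kinetic mixed unfolding e_def by blast
  qed
  define C where "C = C2 * C2 + Cu * C2 + \<bar>M\<bar> * Cu"
  have enlarge: "C2 * C2 * exp (- k * x) \<le> C * exp (- k * x) \<and> Cu * C2 * exp (- k * x) \<le> C * exp (- k * x)
      \<and> \<bar>M\<bar> * Cu * exp (- k * x) \<le> C * exp (- k * x)" for x
    by (intro conjI mult_right_mono) (use Cu C2 in \<open>auto simp: C_def\<close>)
  show thesis
  proof (rule that[of k "R + 1" C])
    fix x assume x: "R + 1 \<le> x"
    show "\<bar>u' x * u' x\<bar> \<le> C * exp (- k * x)" "\<bar>u x * u' x\<bar> \<le> C * exp (- k * x)"
      "\<bar>F (u x)\<bar> \<le> C * exp (- k * x)"
      using bounds[OF x] enlarge[of x] by linarith+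
  qed (use k R in auto)
qed

lemma energy_tendsto_zero: "(energy \<longlongrightarrow> 0) at_top"
proof -
  obtain k R C where k: "0 < k" and "1 \<le> R"
    and kinetic: "\<And>x. R \<le> x \<Longrightarrow> \<bar>u' x * u' x\<bar> \<le> C * exp (- k * x)"
    and "\<And>x. R \<le> x \<Longrightarrow> \<bar>u x * u' x\<bar> \<le> C * exp (- k * x)"
    and potential: "\<And>x. R \<le> x \<Longrightarrow> \<bar>F (u x)\<bar> \<le> C * exp (- k * x)"
    by (fact tail_quantities_decay)
  show ?thesis
  proof (rule Lim_null_comparison)
    show "eventually (\<lambda>x. norm (energy x) \<le> 2 * (C * exp (- k * x))) at_top"
      unfolding eventually_at_top_linorder
    proof (intro exI allI impI)
      fix x assume x: "R \<le> x"
      have "norm (energy x) \<le> \<bar>u' x * u' x\<bar> / 2 + \<bar>F (u x)\<bar>"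
        unfolding energy_def using abs_triangle_ineq[of "u' x * u' x / 2" "F (u x)"] by simp
      then show "norm (energy x) \<le> 2 * (C * exp (- k * x))"
        using kinetic[OF x] potential[OF x] by linarith
    qed
    show "((\<lambda>x. 2 * (C * exp (- k * x))) \<longlongrightarrow> 0) at_top"
      using tendsto_mult_left[OF tendsto_mult_left[OF poly_exp_tendsto_zero[OF k, of 0]]] by simp
  qed
qed

text \<open>A nonincreasing function tending to $0$ is nonnegative.\<close>
lemma energy_nonneg:
  assumes "0 < r"
  shows "0 \<le> energy r"
proof (rule tendsto_upperbound[OF energy_tendsto_zero])
  show "eventually (\<lambda>x. energy x \<le> energy r) at_top"
    unfolding eventually_at_top_linorder using energy_antimono assms by blast
qed simp

text \<open>Since $u'(0) = 0$, the energy starts at $F(u(0))$ and can only decrease.\<close>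
lemma energy_le_origin:
  assumes r: "0 < r"
  shows "energy r \<le> F (u 0)"
proof -
  obtain \<xi> where \<xi>: "\<And>k. 0 < \<xi> k" "\<xi> \<longlonglongrightarrow> 0" "(\<lambda>k. u' (\<xi> k)) \<longlonglongrightarrow> 0"
    "(\<lambda>k. u (\<xi> k)) \<longlonglongrightarrow> u 0"
    using approach_origin by blast
  have "isCont F (u 0)" using DERIV_isCont[OF F_deriv[OF u_pos]] by simp
  then have "(\<lambda>k. u' (\<xi> k) * u' (\<xi> k) / 2 + F (u (\<xi> k))) \<longlonglongrightarrow> 0 * 0 / 2 + F (u 0)"
    by (intro tendsto_intros \<xi>(3) isCont_tendsto_compose[OF _ \<xi>(4)]) simp_all
  then have "(\<lambda>k. energy (\<xi> k)) \<longlonglongrightarrow> F (u 0)" unfolding energy_def by simp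
  then show ?thesis
  proof (rule tendsto_lowerbound)
    show "eventually (\<lambda>k. energy r \<le> energy (\<xi> k)) sequentially"
      using order_tendstoD(2)[OF \<xi>(2) r] by eventually_elim (use energy_antimono \<xi>(1) in auto)
  qed simp
qed

lemma u_attains_max: "\<exists>r0\<ge>0. \<forall>r\<ge>0. u r \<le> u r0"
proof -
  obtain N where N: "\<And>x. N \<le> x \<Longrightarrow> u x < u 0"
    using order_tendstoD(2)[OF u_decays u_pos[of 0]] by (auto simp: eventually_at_top_linorder)
  obtain r0 where r0: "r0 \<in> {0..max N 0}" "\<forall>y\<in>{0..max N 0}. u y \<le> u r0"
    using continuous_attains_sup[of "{0..max N 0}" u] u_continuous_on[of 0 "max N 0"] by auto
  have "u r \<le> u r0" if "0 \<le> r" for r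
  proof (cases "r \<le> max N 0")
    case True
    then show ?thesis using r0(2) that by simp
  next
    case False
    then have "u r < u 0" using N by simp
    moreover have "u 0 \<le> u r0" using r0(2) by simp
    ultimately show ?thesis by simp
  qed
  then show ?thesis using r0(1) by auto
qed

text \<open>At an interior maximum point $u' = 0$ and $u'' \le 0$, so the ODE gives $f(u) \ge 0$.\<close>
lemma interior_max_critical:
  assumes r0: "0 < r0" and max: "\<And>r. 0 \<le> r \<Longrightarrow> u r \<le> u r0"
  shows "u' r0 = 0" "0 \<le> f (u r0)"
proof -
  show u'_zero: "u' r0 = 0"
    by (rule DERIV_local_max[OF u_deriv[OF r0] r0]) (auto simp: abs_less_iff intro!: max)
  have "u'' r0 \<le> 0"
  proof (rule ccontr)
    assume "\<not> u'' r0 \<le> 0"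
    then obtain d where d: "0 < d" "\<And>h. 0 < h \<Longrightarrow> h < d \<Longrightarrow> u' r0 < u' (r0 + h)"
      using DERIV_pos_inc_right[OF u'_deriv[OF r0]] by force
    obtain z where z: "r0 < z" "z < r0 + d / 2" "u (r0 + d / 2) - u r0 = (r0 + d / 2 - r0) * u' z"
      using MVT2[of r0 "r0 + d / 2" u u'] u_deriv r0 d by force
    have "0 < u' z" using d(2)[of "z - r0"] z u'_zero by auto
    then have "0 < (r0 + d / 2 - r0) * u' z" using d by simp
    then have "u r0 < u (r0 + d / 2)" using z(3) by linarith
    then show False using max[of "r0 + d / 2"] r0 d by auto
  qed
  then show "0 \<le> f (u r0)" using u''_eq[OF r0] u'_zero by simp
qed

text \<open>The maximum of $u$ is attained at the origin, provided the primitive $F$ has the shape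
  property proved in Fnl_shape: an interior maximum value $s > u(0)$ would have
  $f(s) \ge 0$ and $0 \le F(s) = E(r_0) \le F(u(0))$.\<close>
lemma max_at_origin:
  assumes shape: "\<And>t s. 0 < t \<Longrightarrow> t < s \<Longrightarrow> 0 \<le> f s \<Longrightarrow> F t < F s \<or> F t < 0"
    and r: "0 \<le> r"
  shows "u r \<le> u 0"
proof -
  obtain r0 where r0: "0 \<le> r0" and max: "\<And>r. 0 \<le> r \<Longrightarrow> u r \<le> u r0"
    using u_attains_max by blast
  have "u r0 \<le> u 0"
  proof (rule ccontr)
    assume above: "\<not> u r0 \<le> u 0"
    then have r0_pos: "0 < r0" using r0 by (cases "r0 = 0") auto
    note critical = interior_max_critical[OF r0_pos max]
    have "energy r0 = F (u r0)" unfolding energy_def using critical(1) by simp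
    then have "F (u r0) \<le> F (u 0)" "0 \<le> F (u 0)"
      using energy_le_origin[OF r0_pos] energy_nonneg[OF r0_pos] by linarith+
    moreover have "F (u 0) < F (u r0) \<or> F (u 0) < 0"
      using shape[OF u_pos[of 0] _ critical(2)] above by simp
    ultimately show False by linarith
  qed
  then show ?thesis using max[OF r] by simp
qed

definition sigma :: "real \<Rightarrow> real" where
  "sigma s = 2 * real n * F s - (real n - 2) * s * f s"

definition pohozaev :: "real \<Rightarrow> real" where
  "pohozaev r = r ^ n * (u' r * u' r + 2 * F (u r)) + (real n - 2) * (r ^ (n - 1) * (u r * u' r))"

lemma pohozaev_deriv:
  assumes r: "0 < r"
  shows "(pohozaev has_real_derivative r ^ (n - 1) * sigma (u r)) (at r)"
proof -
  obtain m where nm: "n = Suc m" using dim by (cases n) auto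
  have m: "n - 1 = m" using nm by simp
  have F_u: "((\<lambda>r. F (u r)) has_real_derivative f (u r) * u' r) (at r)"
    by (rule DERIV_chain2[OF F_deriv u_deriv]) (use r u_pos in auto)
  have pow_n: "((\<lambda>r. r ^ n) has_real_derivative real n * r ^ m) (at r)"
    by (rule DERIV_cong[OF DERIV_pow]) (simp add: nm)
  have pow_m: "((\<lambda>r. r ^ m) has_real_derivative real m * r ^ m / r) (at r)"
    by (rule DERIV_cong[OF DERIV_pow]) (use r in \<open>cases m; simp\<close>)
  have kinetic: "((\<lambda>r. u' r * u' r + 2 * F (u r)) has_real_derivative
      (u'' r * u' r + u'' r * u' r) + 2 * (f (u r) * u' r)) (at r)"
    by (rule DERIV_add[OF DERIV_mult[OF u'_deriv[OF r] u'_deriv[OF r]] DERIV_cmult[OF F_u]])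
  have mixed: "((\<lambda>r. u r * u' r) has_real_derivative u' r * u' r + u'' r * u r) (at r)"
    by (rule DERIV_mult[OF u_deriv[OF r] u'_deriv[OF r]])
  have "(pohozaev has_real_derivative (real n * r ^ m) * (u' r * u' r + 2 * F (u r))
      + ((u'' r * u' r + u'' r * u' r) + 2 * (f (u r) * u' r)) * r ^ n
      + (real n - 2) * ((real m * r ^ m / r) * (u r * u' r) + (u' r * u' r + u'' r * u r) * r ^ m)) (at r)"
    unfolding pohozaev_def[abs_def] m
    by (rule DERIV_add[OF DERIV_mult[OF pow_n kinetic] DERIV_cmult[OF DERIV_mult[OF pow_m mixed]]])
  moreover have "(real n * r ^ m) * (u' r * u' r + 2 * F (u r))
      + ((u'' r * u' r + u'' r * u' r) + 2 * (f (u r) * u' r)) * r ^ n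
      + (real n - 2) * ((real m * r ^ m / r) * (u r * u' r) + (u' r * u' r + u'' r * u r) * r ^ m)
      = r ^ (n - 1) * sigma (u r)"
  proof -
    have identity: "real n * a * (y * y + 2 * G) + (r * a) * (z * y + y * z + 2 * (g * y))
        + (real n - 2) * (real m * a / r * (x * y) + a * (y * y + x * z))
        = a * (2 * real n * G - (real n - 2) * x * g)"
      if "z = - (real m / r * y) - g" for a x y z G g :: real
      unfolding that using r nm by (simp add: field_simps)
    have "u'' r = - (real m / r * u' r) - f (u r)" using u''_eq[OF r] nm by simp
    from identity[where a = "r ^ m" and x = "u r" and y = "u' r" and z = "u'' r"
        and G = "F (u r)" and g = "f (u r)", OF this] show ?thesis
      unfolding sigma_def m by (simp add: nm algebra_simps)
  qed
  ultimately show ?thesis by simp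
qed

lemma pohozaev_antimono:
  assumes sigma_nonpos: "\<And>r. 0 < r \<Longrightarrow> sigma (u r) \<le> 0" and "0 < a" "a \<le> b"
  shows "pohozaev b \<le> pohozaev a"
proof (rule DERIV_nonpos_imp_nonincreasing[OF assms(3)])
  fix x assume "a \<le> x" "x \<le> b"
  then have x: "0 < x" using assms by auto
  have "x ^ (n - 1) * sigma (u x) \<le> 0"
    using mult_nonneg_nonpos[OF _ sigma_nonpos[OF x], of "x ^ (n - 1)"] x by simp
  then show "\<exists>y. (pohozaev has_real_derivative y) (at x) \<and> y \<le> 0"
    using pohozaev_deriv[OF x] by blast
qed

text \<open>$P$ vanishes at infinity: every term decays like $x^n e^{-kx}$.\<close>
lemma pohozaev_tendsto_zero: "(pohozaev \<longlongrightarrow> 0) at_top"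
proof -
  obtain k R C where k: "0 < k" and R: "1 \<le> R"
    and kinetic: "\<And>x. R \<le> x \<Longrightarrow> \<bar>u' x * u' x\<bar> \<le> C * exp (- k * x)"
    and mixed: "\<And>x. R \<le> x \<Longrightarrow> \<bar>u x * u' x\<bar> \<le> C * exp (- k * x)"
    and potential: "\<And>x. R \<le> x \<Longrightarrow> \<bar>F (u x)\<bar> \<le> C * exp (- k * x)"
    by (fact tail_quantities_decay)
  define K where "K = (3 + \<bar>real n - 2\<bar>) * C"
  show ?thesis
  proof (rule Lim_null_comparison)
    show "eventually (\<lambda>x. norm (pohozaev x) \<le> K * (x ^ n * exp (- k * x))) at_top"
      unfolding eventually_at_top_linorder
    proof (intro exI allI impI)
      fix x assume x: "R \<le> x"
      define e where "e = C * exp (- k * x)"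
      have x1: "1 \<le> x" using x R by simp
      have e: "0 \<le> e" unfolding e_def using potential[OF x] by linarith
      have "x ^ (n - 1) \<le> x ^ n" using x1 by (simp add: power_increasing)
      have "\<bar>u' x * u' x + 2 * F (u x)\<bar> \<le> 3 * e"
        using kinetic[OF x] potential[OF x] unfolding e_def by linarith
      then have "x ^ n * \<bar>u' x * u' x + 2 * F (u x)\<bar> \<le> x ^ n * (3 * e)"
        using x1 by (intro mult_left_mono) auto
      moreover have "x ^ (n - 1) * \<bar>u x * u' x\<bar> \<le> x ^ n * e"
        using mixed[OF x] \<open>x ^ (n - 1) \<le> x ^ n\<close> e x1 unfolding e_def
        by (intro mult_mono) auto
      then have "\<bar>real n - 2\<bar> * (x ^ (n - 1) * \<bar>u x * u' x\<bar>) \<le> \<bar>real n - 2\<bar> * (x ^ n * e)"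
        by (intro mult_left_mono) auto
      moreover have "norm (pohozaev x) \<le> x ^ n * \<bar>u' x * u' x + 2 * F (u x)\<bar>
          + \<bar>real n - 2\<bar> * (x ^ (n - 1) * \<bar>u x * u' x\<bar>)"
      proof -
        have "\<bar>x ^ n\<bar> = x ^ n" "\<bar>x ^ (n - 1)\<bar> = x ^ (n - 1)" using x1 by simp_all
        then show ?thesis
          unfolding pohozaev_def real_norm_def
          using abs_triangle_ineq[of "x ^ n * (u' x * u' x + 2 * F (u x))"
              "(real n - 2) * (x ^ (n - 1) * (u x * u' x))"]
          by (simp only: abs_mult)
      qed
      ultimately have "norm (pohozaev x) \<le> x ^ n * (3 * e) + \<bar>real n - 2\<bar> * (x ^ n * e)"
        by linarith
      also have "\<dots> = K * (x ^ n * exp (- k * x))" unfolding K_def e_def by (simp add: algebra_simps)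
      finally show "norm (pohozaev x) \<le> K * (x ^ n * exp (- k * x))" .
    qed
    show "((\<lambda>x. K * (x ^ n * exp (- k * x))) \<longlongrightarrow> 0) at_top"
      using tendsto_mult_left[OF poly_exp_tendsto_zero[OF k, of n]] by simp
  qed
qed

text \<open>If $\Sigma(u) \le 0$ everywhere, then $P$ decreases from its value $0$ at the origin.\<close>
lemma pohozaev_nonpos:
  assumes sigma_nonpos: "\<And>r. 0 < r \<Longrightarrow> sigma (u r) \<le> 0" and r: "0 < r"
  shows "pohozaev r \<le> 0"
proof -
  obtain \<xi> where \<xi>: "\<And>k. 0 < \<xi> k" "\<xi> \<longlonglongrightarrow> 0" "(\<lambda>k. u' (\<xi> k)) \<longlonglongrightarrow> 0"
    "(\<lambda>k. u (\<xi> k)) \<longlonglongrightarrow> u 0"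
    using approach_origin by blast
  have "isCont F (u 0)" using DERIV_isCont[OF F_deriv[OF u_pos]] by simp
  then have "(\<lambda>k. pohozaev (\<xi> k)) \<longlonglongrightarrow> 0 ^ n * (0 * 0 + 2 * F (u 0))
      + (real n - 2) * (0 ^ (n - 1) * (u 0 * 0))"
    unfolding pohozaev_def by (intro tendsto_intros \<xi> isCont_tendsto_compose[OF _ \<xi>(4)])
  then have "(\<lambda>k. pohozaev (\<xi> k)) \<longlonglongrightarrow> 0" using dim by (simp add: power_0_left)
  then show ?thesis
  proof (rule tendsto_lowerbound)
    show "eventually (\<lambda>k. pohozaev r \<le> pohozaev (\<xi> k)) sequentially"
      using order_tendstoD(2)[OF \<xi>(2) r] 
      by eventually_elim (use pohozaev_antimono[OF sigma_nonpos] \<xi>(1) in auto)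
  qed simp
qed

lemma sigma_at_threshold:
  assumes B: "0 < B" and sigma_neg: "\<And>s. 0 < s \<Longrightarrow> s < B \<Longrightarrow> sigma s < 0"
  shows "sigma B \<le> 0"
proof (rule tendsto_upperbound)
  have "isCont sigma B"
    unfolding sigma_def[abs_def] using DERIV_isCont[OF F_deriv[OF B]] f_cont[OF B]
    by (intro continuous_intros) auto
  then show "(sigma \<longlongrightarrow> sigma B) (at_left B)"
    by (simp add: isCont_def filterlim_at_split)
  show "eventually (\<lambda>s. sigma s \<le> 0) (at_left B)"
    using eventually_at_left_real[OF B] by eventually_elim (auto intro: less_imp_le sigma_neg)
qed simp

text \<open>Pohozaev argument: if $u(0) \le B$, then $\Sigma(u) \le 0$ everywhere, so $P \le 0$ and,
  since $P$ decreases to $0$ at infinity, also $P \ge 0$; but $P$ decreases strictly on the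
  tail where $u < B$.\<close>
lemma pohozaev_threshold:
  assumes B: "0 < B" and sigma_neg: "\<And>s. 0 < s \<Longrightarrow> s < B \<Longrightarrow> sigma s < 0"
    and max: "\<And>r. 0 \<le> r \<Longrightarrow> u r \<le> u 0"
  shows "B < u 0"
proof (rule ccontr)
  assume "\<not> B < u 0"
  then have below: "u r \<le> B" if "0 \<le> r" for r using max[OF that] by simp
  have sigma_nonpos: "sigma (u r) \<le> 0" if "0 < r" for r
    using sigma_neg[of "u r"] sigma_at_threshold[OF B sigma_neg] below[of r] u_pos[of r] that
    by (cases "u r < B") auto
  have P_nonneg: "0 \<le> pohozaev r" if "0 < r" for r
  proof (rule tendsto_upperbound[OF pohozaev_tendsto_zero])
    show "eventually (\<lambda>x. pohozaev x \<le> pohozaev r) at_top"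
      unfolding eventually_at_top_linorder using pohozaev_antimono[OF sigma_nonpos] that by blast
  qed simp
  obtain N where N: "\<And>x. N \<le> x \<Longrightarrow> u x < B"
    using order_tendstoD(2)[OF u_decays B] by (auto simp: eventually_at_top_linorder)
  define R where "R = max N 1"
  have R: "1 \<le> R" "\<And>x. R \<le> x \<Longrightarrow> u x < B" using N by (auto simp: R_def)
  obtain z where z: "R < z" "z < R + 1"
    "pohozaev (R + 1) - pohozaev R = (R + 1 - R) * (z ^ (n - 1) * sigma (u z))"
    using MVT2[of R "R + 1" pohozaev "\<lambda>z. z ^ (n - 1) * sigma (u z)"] pohozaev_deriv R(1)
    by force
  have "sigma (u z) < 0" using sigma_neg[of "u z"] u_pos[of z] R z by auto
  moreover have "0 < z ^ (n - 1)" using z R(1) by simp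
  ultimately have "z ^ (n - 1) * sigma (u z) < 0" by (simp add: mult_pos_neg)
  then have "pohozaev (R + 1) < pohozaev R" using z(3) by simp
  moreover have "pohozaev R \<le> 0" using pohozaev_nonpos[OF sigma_nonpos] R(1) by simp
  ultimately show False using P_nonneg[of "R + 1"] R(1) by simp
qed

end

theorem theorem2:
  fixes n :: nat and p q \<omega> B :: real and u u' u'' :: "real \<Rightarrow> real"
  assumes n: "n \<ge> 1"
    and pq: "1 < p" "p < q"
    and om: "0 < \<omega>" "\<omega> < omega_pq p q"
    and pos: "\<forall>r\<ge>0. u r > 0"
    and d1: "\<forall>r>0. (u has_real_derivative u' r) (at r)"
    and d2: "\<forall>r>0. (u' has_real_derivative u'' r) (at r)"
    and ode: "\<forall>r>0. u'' r + (real n - 1) / r * u' r + fnl \<omega> p q (u r) = 0"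
    and d0: "(u has_real_derivative 0) (at 0 within {0..})"
    and lim: "(u \<longlongrightarrow> 0) at_top"
    and Bpos: "B > 0"
    and Bneg: "\<forall>s. 0 < s \<and> s < B \<longrightarrow> Sigma n \<omega> p q s < 0"
    and Bposr: "\<exists>C>B. \<forall>s. B < s \<and> s < C \<longrightarrow> Sigma n \<omega> p q s > 0"
  shows "B < (SUP r\<in>{0..}. u r) \<and> (SUP r\<in>{0..}. u r) = u 0"
proof -
  have pq0: "0 < p" "0 < q" using pq by auto
  interpret radial_profile n "fnl \<omega> p q" "Fnl \<omega> p q" u u' u''
  proof
    show "1 \<le> n" by (rule n)
    show "\<And>s. 0 < s \<Longrightarrow> (Fnl \<omega> p q has_real_derivative fnl \<omega> p q s) (at s)"
      by (rule Fnl_has_derivative[OF pq0])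
    show "\<And>s. 0 < s \<Longrightarrow> isCont (fnl \<omega> p q) s"
      using fnl_continuous_on[OF pq0] by (rule continuous_on_interior) simp
    show "\<exists>c>0. \<exists>\<delta>>0. \<exists>M. \<forall>s. 0 < s \<and> s < \<delta> \<longrightarrow>
        fnl \<omega> p q s \<le> - c * s \<and> \<bar>Fnl \<omega> p q s\<bar> \<le> M * s"
      by (rule fnl_small_amplitude[OF pq om(1)])
    show "\<And>r. 0 \<le> r \<Longrightarrow> 0 < u r" using pos by simp
    show "\<And>r. 0 < r \<Longrightarrow> (u has_real_derivative u' r) (at r)" using d1 by simp
    show "\<And>r. 0 < r \<Longrightarrow> (u' has_real_derivative u'' r) (at r)" using d2 by simp
    show "\<And>r. 0 < r \<Longrightarrow> u'' r + (real n - 1) / r * u' r + fnl \<omega> p q (u r) = 0" using ode by simp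
  qed (fact d0 lim)+
  have max: "\<And>r. 0 \<le> r \<Longrightarrow> u r \<le> u 0"
    by (rule max_at_origin[OF Fnl_shape[OF pq]])
  have "B < u 0"
    by (rule pohozaev_threshold[OF Bpos _ max]) (use Bneg in \<open>auto simp: sigma_def Sigma_def\<close>)
  moreover have "(SUP r\<in>{0..}. u r) = u 0"
    by (rule cSup_eq_maximum) (use max in auto)
  ultimately show ?thesis by simp
qed

end
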